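(* Let $A\in\mathbb{R}^{n\times n}$ with $A\ge 0$, $B\in\mathbb{R}^{n\times m}$, $C\in\mathbb{R}^{p\times n}$, and let $\mathcal{X}=\{(x,\overline{x},\underline{x}) : x,\overline{x},\underline{x}\in\mathbb{R}^n_+,\ \underline{x}\le x\le \overline{x}\}$. For gains $\overline{K},\underline{K}\in\mathbb{R}^{m\times n}$, $\overline{L},\underline{L}\in\mathbb{R}^{n\times p}$ let \[ M(\overline{K},\underline{K},\overline{L},\underline{L})=\begin{bmatrix} A & B\overline{K} & B\underline{K} \\ \overline{L}C & A-\overline{L}C+B\overline{K} & B\underline{K} \\ \underline{L}C & B\overline{K} & A-\underline{L}C+B\underline{K} \end{bmatrix}. \] If there exist gains $\overline{K},\underline{K},\overline{L},\underline{L}$ with $\underline{L}C\ge0$ such that $M(\overline{K},\underline{K},\overline{L},\underline{L})$ is Schur and $\mathcal{X}$ is invariant under $z(t+1)=M(\overline{K},\underline{K},\overline{L},\underline{L})z(t)$, then there also exist such gains with $\overline{K}=0$, i.e., gains $\underline{K}',\overline{L}',\underline{L}'$ with $\underline{L}'C\ge 0$ such that $M(0,\underline{K}',\overline{L}',\underline{L}')$ is Schur and $\mathcal{X}$ is invariant under $z(t+1)=M(0,\underline{K}',\overline{L}',\underline{L}')z(t)$.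
   Context: All inequalities between matrices or vectors are element-wise; $\mathbb{R}^n_+$ is the closed nonnegative orthant. A square matrix is Schur if its spectral radius is less than $1$. $M$ is the closed-loop matrix of $x(t+1)=Ax(t)+Bu(t)$, $y(t)=Cx(t)$ with upper/lower Luenberger observers $\overline{x}(t+1)=(A-\overline{L}C)\overline{x}(t)+\overline{L}y(t)+Bu(t)$, $\underline{x}(t+1)=(A-\underline{L}C)\underline{x}(t)+\underline{L}y(t)+Bu(t)$ and feedback $u=\underline{K}\,\underline{x}+\overline{K}\,\overline{x}$. Invariance of $\mathcal{X}$ means every trajectory starting in $\mathcal{X}$ stays in $\mathcal{X}$ for all $t\ge0$. *)

theory Defs
  imports "Jordan_Normal_Form.Spectral_Radius"
begin

definition nonneg_mat :: "real mat \<Rightarrow> bool" where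
  "nonneg_mat M \<longleftrightarrow> (\<forall>i < dim_row M. \<forall>j < dim_col M. M $$ (i, j) \<ge> 0)"

definition schur :: "real mat \<Rightarrow> bool" where
  "schur M \<longleftrightarrow> spectral_radius (map_mat complex_of_real M) < 1"

definition block3 :: "nat \<Rightarrow> (nat \<Rightarrow> nat \<Rightarrow> real mat) \<Rightarrow> real mat" where
  "block3 n b = mat (3 * n) (3 * n) (\<lambda>(i, j). b (i div n) (j div n) $$ (i mod n, j mod n))"

(* closed-loop matrix M(Kbar, Kund, Lbar, Lund) acting on z = (x, xbar, xund) *)
definition closed_loop ::
  "nat \<Rightarrow> real mat \<Rightarrow> real mat \<Rightarrow> real mat \<Rightarrow> real mat \<Rightarrow> real mat \<Rightarrow> real mat \<Rightarrow> real mat \<Rightarrow> real mat" where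
  "closed_loop n A B C Kb Ku Lb Lu = block3 n (\<lambda>i j.
     if i = 0 then (if j = 0 then A else if j = 1 then B * Kb else B * Ku)
     else if i = 1 then (if j = 0 then Lb * C else if j = 1 then A - Lb * C + B * Kb else B * Ku)
     else (if j = 0 then Lu * C else if j = 1 then B * Kb else A - Lu * C + B * Ku))"

definition Xset :: "nat \<Rightarrow> real vec set" where
  "Xset n = {z. dim_vec z = 3 * n \<and>
     (\<forall>i < n. 0 \<le> z $ i \<and> 0 \<le> z $ (n + i) \<and> 0 \<le> z $ (2 * n + i) \<and>
              z $ (2 * n + i) \<le> z $ i \<and> z $ i \<le> z $ (n + i))}"

definition invariant_under :: "real mat \<Rightarrow> real vec set \<Rightarrow> bool" where
  "invariant_under M S \<longleftrightarrow> (\<forall>z \<in> S. \<forall>t::nat. (M ^\<^sub>m t) *\<^sub>v z \<in> S)"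

end

theory Submission
  imports Defs
begin

(* In the error coordinates (xu, xb - x, x - xu) of the two observers, the closed loop
   M(Kb, Ku, Lb, Lu) is similar to the block upper triangular matrix
     [A + B Kb + B Ku,  B Kb,     Lu C + B Kb]
     [0,                A - Lb C, 0          ]
     [0,                0,        A - Lu C   ].
   These coordinates map X onto the nonnegative orthant, so X is invariant exactly when
   this triangular matrix is entrywise nonnegative, and the characteristic polynomial of
   M is the product of those of the three diagonal blocks. Moving the whole feedback to
   the lower estimate, (Kb, Ku) := (0, Kb + Ku), keeps the diagonal blocks, hence the
   spectrum, and replaces the off-diagonal blocks by 0 and Lu C >= 0. *)

section \<open>Block matrices with three block rows\<close>

lemma less_3n_cases:
  fixes i n :: nat
  assumes "i < 3 * n"
  obtains "i < n" "i div n = 0" "i mod n = i"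
    | "n \<le> i" "i < 2 * n" "i div n = 1" "i mod n = i - n"
    | "2 * n \<le> i" "i < 3 * n" "i div n = 2" "i mod n = i - 2 * n"
proof -
  consider "i < n" | "n \<le> i" "i < 2 * n" | "2 * n \<le> i" using assms by linarith
  then show thesis
  proof cases
    case 1
    then show thesis by (intro that(1)) simp_all
  next
    case 2
    then have "i div n = 1" by (intro div_nat_eqI) simp_all
    then have "i mod n = i - n" by (metis minus_div_mult_eq_mod mult_1)
    with 2 \<open>i div n = 1\<close> show thesis by (intro that(2))
  next
    case 3
    then have "i div n = 2" using assms by (intro div_nat_eqI) simp_all
    then have "i mod n = i - 2 * n" by (metis minus_div_mult_eq_mod mult.commute)
    with 3 assms \<open>i div n = 2\<close> show thesis by (intro that(3))
  qed
qed

lemma all_less_3n: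
  fixes n :: nat
  shows "(\<forall>i < 3 * n. P i) \<longleftrightarrow> (\<forall>i < n. P i \<and> P (n + i) \<and> P (2 * n + i))"
proof
  assume "\<forall>i < 3 * n. P i"
  then show "\<forall>i < n. P i \<and> P (n + i) \<and> P (2 * n + i)" by simp
next
  assume *: "\<forall>i < n. P i \<and> P (n + i) \<and> P (2 * n + i)"
  show "\<forall>i < 3 * n. P i"
  proof (intro allI impI)
    fix i assume "i < 3 * n"
    then show "P i"
    proof (cases rule: less_3n_cases)
      case 1
      then show ?thesis using * by blast
    next
      case 2
      then have "i - n < n" by simp
      then have "P (n + (i - n))" using * by blast
      with \<open>n \<le> i\<close> show ?thesis by simp
    next
      case 3
      then have "i - 2 * n < n" by simp
      then have "P (2 * n + (i - 2 * n))" using * by blast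
      with \<open>2 * n \<le> i\<close> show ?thesis by simp
    qed
  qed
qed

lemma index_block3:
  "i < 3 * n \<Longrightarrow> j < 3 * n \<Longrightarrow> block3 n b $$ (i, j) = b (i div n) (j div n) $$ (i mod n, j mod n)"
  by (simp add: block3_def)

lemma dim_block3 [simp]: "dim_row (block3 n b) = 3 * n" "dim_col (block3 n b) = 3 * n"
  by (simp_all add: block3_def)

lemma block3_carrier [simp]: "block3 n b \<in> carrier_mat (3 * n) (3 * n)"
  by (simp add: carrier_matI)

lemma index_append_vec3:
  assumes f: "\<And>l. l < 3 \<Longrightarrow> f l \<in> carrier_vec n" and i: "i < 3 * n"
  shows "(f 0 @\<^sub>v f 1 @\<^sub>v f 2) $ i = f (i div n) $ (i mod n)"
proof -
  have dims: "dim_vec (f 0) = n" "dim_vec (f 1) = n" "dim_vec (f 2) = n"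
    using f[of 0] f[of 1] f[of 2] by auto
  from i show ?thesis
  proof (cases rule: less_3n_cases)
    case 1
    with dims show ?thesis by simp
  next
    case 2
    then have "i - n < n" by simp
    with 2 dims show ?thesis by simp
  next
    case 3
    then have "\<not> i - n < n" "i - n - n = i - 2 * n" by simp_all
    with 3 dims show ?thesis by simp
  qed
qed

lemma row_block3:
  assumes b: "\<And>k l. k < 3 \<Longrightarrow> l < 3 \<Longrightarrow> b k l \<in> carrier_mat n n" and i: "i < 3 * n"
  shows "row (block3 n b) i =
    row (b (i div n) 0) (i mod n) @\<^sub>v row (b (i div n) 1) (i mod n) @\<^sub>v row (b (i div n) 2) (i mod n)"
proof -
  define f where "f l = row (b (i div n) l) (i mod n)" for l
  have "i div n < 3" "i mod n < n" using i by (auto simp: less_mult_imp_div_less)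
  then have f: "f l \<in> carrier_vec n" if "l < 3" for l
    using b[of "i div n" l] that by (simp add: f_def)
  have "row (block3 n b) i = f 0 @\<^sub>v f 1 @\<^sub>v f 2"
  proof (rule eq_vecI)
    fix j assume "j < dim_vec (f 0 @\<^sub>v f 1 @\<^sub>v f 2)"
    then have j: "j < 3 * n" using f[of 0] f[of 1] f[of 2] by auto
    then have "j div n < 3" "j mod n < n" by (auto simp: less_mult_imp_div_less)
    then show "row (block3 n b) i $ j = (f 0 @\<^sub>v f 1 @\<^sub>v f 2) $ j"
      using index_append_vec3[of f, OF f j] i j b[OF \<open>i div n < 3\<close> \<open>j div n < 3\<close>]
      by (simp add: index_block3 f_def)
  qed (use f[of 0] f[of 1] f[of 2] in auto)
  then show ?thesis by (simp add: f_def)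
qed

lemma block3_mult_append_vec:
  assumes b: "\<And>k l. k < 3 \<Longrightarrow> l < 3 \<Longrightarrow> b k l \<in> carrier_mat n n"
    and x: "x \<in> carrier_vec n" and y: "y \<in> carrier_vec n" and w: "w \<in> carrier_vec n"
  shows "block3 n b *\<^sub>v (x @\<^sub>v y @\<^sub>v w) =
      (b 0 0 *\<^sub>v x + b 0 1 *\<^sub>v y + b 0 2 *\<^sub>v w) @\<^sub>v
      (b 1 0 *\<^sub>v x + b 1 1 *\<^sub>v y + b 1 2 *\<^sub>v w) @\<^sub>v
      (b 2 0 *\<^sub>v x + b 2 1 *\<^sub>v y + b 2 2 *\<^sub>v w)"
proof -
  define c where "c k = b k 0 *\<^sub>v x + b k 1 *\<^sub>v y + b k 2 *\<^sub>v w" for k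
  have c: "c k \<in> carrier_vec n" if "k < 3" for k
    using b[of k 0] b[of k 1] b[of k 2] x y w that by (auto simp: c_def)
  have "block3 n b *\<^sub>v (x @\<^sub>v y @\<^sub>v w) = c 0 @\<^sub>v c 1 @\<^sub>v c 2"
  proof (rule eq_vecI)
    fix i assume "i < dim_vec (c 0 @\<^sub>v c 1 @\<^sub>v c 2)"
    then have i: "i < 3 * n" using c[of 0] c[of 1] c[of 2] by auto
    then have k: "i div n < 3" and r: "i mod n < n" by (auto simp: less_mult_imp_div_less)
    have rows: "row (b (i div n) l) (i mod n) \<in> carrier_vec n" if "l < 3" for l
      using b[OF k that] r by auto
    have "(block3 n b *\<^sub>v (x @\<^sub>v y @\<^sub>v w)) $ i = row (block3 n b) i \<bullet> (x @\<^sub>v y @\<^sub>v w)"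
      using i by simp
    also have "\<dots> = row (b (i div n) 0) (i mod n) \<bullet> x + row (b (i div n) 1) (i mod n) \<bullet> y
        + row (b (i div n) 2) (i mod n) \<bullet> w"
      using rows[of 0] rows[of 1] rows[of 2] x y w
      by (simp add: row_block3[OF b i] scalar_prod_append[of _ n _ "n + n"] scalar_prod_append[of _ n _ n])
    also have "\<dots> = c (i div n) $ (i mod n)"
      using b[OF k, of 0] b[OF k, of 1] b[OF k, of 2] r x y w by (simp add: c_def)
    also have "\<dots> = (c 0 @\<^sub>v c 1 @\<^sub>v c 2) $ i"
      using index_append_vec3[of c, OF c i] by simp
    finally show "(block3 n b *\<^sub>v (x @\<^sub>v y @\<^sub>v w)) $ i = (c 0 @\<^sub>v c 1 @\<^sub>v c 2) $ i" .
  qed (use c[of 0] c[of 1] c[of 2] in auto)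
  then show ?thesis by (simp add: c_def)
qed

lemma carrier_vec_3n_cases:
  assumes "z \<in> carrier_vec (3 * n)"
  obtains x y w where "x \<in> carrier_vec n" "y \<in> carrier_vec n" "w \<in> carrier_vec n"
    and "z = x @\<^sub>v y @\<^sub>v w"
proof -
  define f where "f l = vec n (\<lambda>i. z $ (l * n + i))" for l
  have f: "f l \<in> carrier_vec n" for l by (simp add: f_def)
  have "z = f 0 @\<^sub>v f 1 @\<^sub>v f 2"
  proof (rule eq_vecI)
    fix i assume "i < dim_vec (f 0 @\<^sub>v f 1 @\<^sub>v f 2)"
    then have i: "i < 3 * n" using f[of 0] f[of 1] f[of 2] by auto
    then have "i mod n < n" by auto
    then show "z $ i = (f 0 @\<^sub>v f 1 @\<^sub>v f 2) $ i"
      unfolding index_append_vec3[of f, OF f i] by (simp add: f_def)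
  qed (use assms f[of 0] f[of 1] f[of 2] in auto)
  with f show thesis by (intro that)
qed

lemma eq_mat_mult_vecI:
  fixes A B :: "'a :: semiring_1 mat"
  assumes "A \<in> carrier_mat nr nc" "B \<in> carrier_mat nr nc"
    and "\<And>v. v \<in> carrier_vec nc \<Longrightarrow> A *\<^sub>v v = B *\<^sub>v v"
  shows "A = B"
proof (rule eq_matI)
  fix i j assume "i < dim_row B" "j < dim_col B"
  then have "A $$ (i, j) = (A *\<^sub>v unit_vec nc j) $ i" "B $$ (i, j) = (B *\<^sub>v unit_vec nc j) $ i"
    using assms(1,2) by (simp_all add: scalar_prod_right_unit)
  then show "A $$ (i, j) = B $$ (i, j)"
    using assms(3)[of "unit_vec nc j"] by simp
qed (use assms in auto)

lemma zero_mult_mat_vec: "v \<in> carrier_vec nc \<Longrightarrow> 0\<^sub>m nr nc *\<^sub>v v = (0\<^sub>v nr :: 'a :: semiring_0 vec)"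
  by (intro eq_vecI) (auto simp: scalar_prod_def)

section \<open>Characteristic polynomials of block triangular matrices\<close>

lemma char_poly_lower_left_zero:
  fixes N :: "'a :: idom mat"
  assumes N: "N \<in> carrier_mat (k + l) (k + l)"
    and zero: "\<And>i j. k \<le> i \<Longrightarrow> i < k + l \<Longrightarrow> j < k \<Longrightarrow> N $$ (i, j) = 0"
  shows "char_poly N = char_poly (mat k k (\<lambda>(i, j). N $$ (i, j))) *
    char_poly (mat l l (\<lambda>(i, j). N $$ (k + i, k + j)))"
proof -
  let ?P = "char_poly_matrix N"
  obtain P1 P2 P3 P4 where sb: "split_block ?P k k = (P1, P2, P3, P4)"
    by (cases "split_block ?P k k") auto
  have dims: "dim_row ?P = k + l" "dim_col ?P = k + l"
    using char_poly_matrix_closed[OF N] by auto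
  note parts = split_block[OF sb dims]
  have "P1 = char_poly_matrix (mat k k (\<lambda>(i, j). N $$ (i, j)))"
    using sb N by (intro eq_matI) (auto simp: split_block_def char_poly_matrix_def)
  moreover have "P4 = char_poly_matrix (mat l l (\<lambda>(i, j). N $$ (k + i, k + j)))"
    using sb N by (intro eq_matI) (auto simp: split_block_def char_poly_matrix_def add.commute)
  moreover have "P3 = 0\<^sub>m l k"
    using sb N zero by (intro eq_matI) (auto simp: split_block_def char_poly_matrix_def)
  then have "det ?P = det P1 * det P4"
    by (subst parts(5)) (rule det_four_block_mat_lower_left_zero[OF parts(1,2) _ parts(4)])
  ultimately show ?thesis unfolding char_poly_def by simp
qed

lemma char_poly_block3_upper_triangular:
  assumes b: "\<And>i j. i < 3 \<Longrightarrow> j < 3 \<Longrightarrow> b i j \<in> carrier_mat n n"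
    and zero: "b 1 0 = 0\<^sub>m n n" "b 2 0 = 0\<^sub>m n n" "b 2 1 = 0\<^sub>m n n"
  shows "char_poly (block3 n b) = char_poly (b 0 0) * char_poly (b 1 1) * char_poly (b 2 2)"
proof -
  let ?N = "block3 n b"
  define L where "L = mat (n + n) (n + n) (\<lambda>(i, j). ?N $$ (n + i, n + j))"
  have "char_poly ?N = char_poly (mat n n (\<lambda>(i, j). ?N $$ (i, j))) * char_poly L"
    unfolding L_def
  proof (rule char_poly_lower_left_zero)
    show "?N \<in> carrier_mat (n + (n + n)) (n + (n + n))" by (simp add: carrier_matI)
    fix i j assume "n \<le> i" "i < n + (n + n)" "j < n"
    then have "i < 3 * n" by simp
    then show "?N $$ (i, j) = 0"
      using zero \<open>n \<le> i\<close> \<open>j < n\<close> by (cases rule: less_3n_cases) (auto simp: index_block3)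
  qed
  also have "mat n n (\<lambda>(i, j). ?N $$ (i, j)) = b 0 0"
    using b[of 0 0] by (intro eq_matI) (auto simp: index_block3)
  also have "char_poly L = char_poly (b 1 1) * char_poly (b 2 2)"
  proof -
    have "char_poly L = char_poly (mat n n (\<lambda>(i, j). L $$ (i, j))) * char_poly (mat n n (\<lambda>(i, j). L $$ (n + i, n + j)))"
    proof (rule char_poly_lower_left_zero)
      show "L \<in> carrier_mat (n + n) (n + n)" by (simp add: L_def)
      fix i j assume "n \<le> i" "i < n + n" "j < n"
      then obtain i' where "i = n + i'" "i' < n"
        by (metis add_less_cancel_left le_Suc_ex)
      then show "L $$ (i, j) = 0"
        using zero \<open>j < n\<close> by (simp add: L_def index_block3 numeral_2_eq_2)
    qed
    also have "mat n n (\<lambda>(i, j). L $$ (i, j)) = b 1 1"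
      using b[of 1 1] by (intro eq_matI) (auto simp: L_def index_block3)
    also have "mat n n (\<lambda>(i, j). L $$ (n + i, n + j)) = b 2 2"
      using b[of 2 2] by (intro eq_matI) (auto simp: L_def index_block3 numeral_2_eq_2)
    finally show ?thesis .
  qed
  finally show ?thesis by (simp add: mult.assoc)
qed

lemma schur_cong_char_poly:
  assumes "M \<in> carrier_mat k k" "M' \<in> carrier_mat k k" and "char_poly M = char_poly M'"
  shows "schur M \<longleftrightarrow> schur M'"
proof -
  have "spectrum (map_mat complex_of_real M) = spectrum (map_mat complex_of_real M')"
    using assms by (simp add: spectrum_root_char_poly[of _ k] of_real_hom.char_poly_hom)
  then show ?thesis by (simp add: schur_def spectral_radius_def)
qed

section \<open>Positivity and invariance\<close>

lemma invariant_under_iff_step: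
  assumes M: "M \<in> carrier_mat k k" and S: "S \<subseteq> carrier_vec k"
  shows "invariant_under M S \<longleftrightarrow> (\<forall>z \<in> S. M *\<^sub>v z \<in> S)"
proof
  assume "invariant_under M S"
  then have "(M ^\<^sub>m 1) *\<^sub>v z \<in> S" if "z \<in> S" for z
    using that unfolding invariant_under_def by blast
  then show "\<forall>z \<in> S. M *\<^sub>v z \<in> S" using M by simp
next
  assume step: "\<forall>z \<in> S. M *\<^sub>v z \<in> S"
  have "(M ^\<^sub>m t) *\<^sub>v z \<in> S" if "z \<in> S" for t z
    using that
  proof (induction t arbitrary: z)
    case 0
    with M S show ?case by auto
  next
    case (Suc t)
    have "(M ^\<^sub>m Suc t) *\<^sub>v z = (M ^\<^sub>m t) *\<^sub>v (M *\<^sub>v z)"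
      using M S Suc.prems by (auto intro: assoc_mult_mat_vec)
    with Suc step show ?case by simp
  qed
  then show "invariant_under M S" unfolding invariant_under_def by blast
qed

lemma nonneg_mat_iff_mult_vec:
  assumes N: "N \<in> carrier_mat nr nc"
  shows "nonneg_mat N \<longleftrightarrow> (\<forall>v \<in> carrier_vec nc. 0\<^sub>v nc \<le> v \<longrightarrow> 0\<^sub>v nr \<le> N *\<^sub>v v)"
proof
  assume "nonneg_mat N"
  then show "\<forall>v \<in> carrier_vec nc. 0\<^sub>v nc \<le> v \<longrightarrow> 0\<^sub>v nr \<le> N *\<^sub>v v"
    using N by (auto simp: nonneg_mat_def less_eq_vec_def scalar_prod_def intro!: sum_nonneg)
next
  assume *: "\<forall>v \<in> carrier_vec nc. 0\<^sub>v nc \<le> v \<longrightarrow> 0\<^sub>v nr \<le> N *\<^sub>v v"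
  show "nonneg_mat N" unfolding nonneg_mat_def
  proof (intro allI impI)
    fix i j assume ij: "i < dim_row N" "j < dim_col N"
    have "0\<^sub>v nc \<le> (unit_vec nc j :: real vec)" by (simp add: less_eq_vec_def unit_vec_def)
    then have "0\<^sub>v nr \<le> N *\<^sub>v unit_vec nc j" using * by simp
    then have "0 \<le> (N *\<^sub>v unit_vec nc j) $ i" using N ij by (simp add: less_eq_vec_def)
    also have "(N *\<^sub>v unit_vec nc j) $ i = N $$ (i, j)"
      using N ij by (simp add: scalar_prod_right_unit)
    finally show "0 \<le> N $$ (i, j)" .
  qed
qed

lemma nonneg_mat_block3_iff:
  assumes b: "\<And>i j. i < 3 \<Longrightarrow> j < 3 \<Longrightarrow> b i j \<in> carrier_mat n n"
  shows "nonneg_mat (block3 n b) \<longleftrightarrow> (\<forall>i < 3. \<forall>j < 3. nonneg_mat (b i j))"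
proof
  assume nonneg: "nonneg_mat (block3 n b)"
  show "\<forall>i < 3. \<forall>j < 3. nonneg_mat (b i j)"
  proof (intro allI impI)
    fix i j :: nat assume ij: "i < 3" "j < 3"
    have "0 \<le> b i j $$ (r, s)" if "r < n" "s < n" for r s
    proof -
      have bound: "k * n + t < 3 * n" if "k < 3" "t < n" for k t
      proof -
        have "k * n + t < Suc k * n" using that(2) by simp
        also have "\<dots> \<le> 3 * n" using that(1) by (intro mult_le_mono1) simp
        finally show ?thesis .
      qed
      have idx: "i * n + r < 3 * n" "j * n + s < 3 * n" using bound ij that by auto
      then have "0 \<le> block3 n b $$ (i * n + r, j * n + s)"
        using nonneg unfolding nonneg_mat_def by simp
      then show ?thesis using idx that by (simp add: index_block3)
    qed
    then show "nonneg_mat (b i j)" using b[OF ij] by (simp add: nonneg_mat_def)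
  qed
next
  assume nonneg: "\<forall>i < 3. \<forall>j < 3. nonneg_mat (b i j)"
  show "nonneg_mat (block3 n b)" unfolding nonneg_mat_def
  proof (intro allI impI)
    fix i j assume "i < dim_row (block3 n b)" "j < dim_col (block3 n b)"
    then have ij: "i < 3 * n" "j < 3 * n" by simp_all
    then have "i div n < 3" "j div n < 3" "i mod n < n" "j mod n < n"
      by (auto simp: less_mult_imp_div_less)
    then show "0 \<le> block3 n b $$ (i, j)"
      using nonneg b[of "i div n" "j div n"] ij by (simp add: index_block3 nonneg_mat_def)
  qed
qed

section \<open>The observer-based closed loop\<close>

definition observer_loop ::
  "nat \<Rightarrow> real mat \<Rightarrow> real mat \<Rightarrow> real mat \<Rightarrow> real mat \<Rightarrow> real mat \<Rightarrow> real mat" where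
  "observer_loop n A F G P Q = block3 n (\<lambda>i j.
     if i = 0 then (if j = 0 then A else if j = 1 then F else G)
     else if i = 1 then (if j = 0 then P else if j = 1 then A - P + F else G)
     else (if j = 0 then Q else if j = 1 then F else A - Q + G))"

lemma closed_loop_eq_observer_loop:
  "closed_loop n A B C Kb Ku Lb Lu = observer_loop n A (B * Kb) (B * Ku) (Lb * C) (Lu * C)"
  unfolding closed_loop_def observer_loop_def ..

definition error_dynamics ::
  "nat \<Rightarrow> real mat \<Rightarrow> real mat \<Rightarrow> real mat \<Rightarrow> real mat \<Rightarrow> real mat \<Rightarrow> real mat" where
  "error_dynamics n A F G P Q = block3 n (\<lambda>i j.
     if i = 0 then (if j = 0 then A + F + G else if j = 1 then F else Q + F)
     else if i = 1 then (if j = 1 then A - P else 0\<^sub>m n n)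
     else (if j = 2 then A - Q else 0\<^sub>m n n))"

definition estimate_coords :: "nat \<Rightarrow> real mat" where
  "estimate_coords n = block3 n (\<lambda>i j.
     if i = 0 then (if j = 1 then 0\<^sub>m n n else 1\<^sub>m n)
     else if i = 1 then 1\<^sub>m n
     else (if j = 0 then 1\<^sub>m n else 0\<^sub>m n n))"

definition error_coords :: "nat \<Rightarrow> real mat" where
  "error_coords n = block3 n (\<lambda>i j.
     if i = 0 then (if j = 2 then 1\<^sub>m n else 0\<^sub>m n n)
     else if i = 1 then (if j = 0 then - 1\<^sub>m n else if j = 1 then 1\<^sub>m n else 0\<^sub>m n n)
     else (if j = 0 then 1\<^sub>m n else if j = 1 then 0\<^sub>m n n else - 1\<^sub>m n))"

lemma observer_matrices_carrier:
  "observer_loop n A F G P Q \<in> carrier_mat (3 * n) (3 * n)"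
  "error_dynamics n A F G P Q \<in> carrier_mat (3 * n) (3 * n)"
  "estimate_coords n \<in> carrier_mat (3 * n) (3 * n)"
  "error_coords n \<in> carrier_mat (3 * n) (3 * n)"
  by (simp_all add: observer_loop_def error_dynamics_def estimate_coords_def error_coords_def)

lemma observer_loop_mult_vec:
  assumes "A \<in> carrier_mat n n" "F \<in> carrier_mat n n" "G \<in> carrier_mat n n"
      "P \<in> carrier_mat n n" "Q \<in> carrier_mat n n"
    and "x \<in> carrier_vec n" "y \<in> carrier_vec n" "w \<in> carrier_vec n"
  shows "observer_loop n A F G P Q *\<^sub>v (x @\<^sub>v y @\<^sub>v w) =
    (A *\<^sub>v x + F *\<^sub>v y + G *\<^sub>v w) @\<^sub>v
    (P *\<^sub>v x + (A - P + F) *\<^sub>v y + G *\<^sub>v w) @\<^sub>v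
    (Q *\<^sub>v x + F *\<^sub>v y + (A - Q + G) *\<^sub>v w)"
  unfolding observer_loop_def using assms by (subst block3_mult_append_vec) auto

lemma error_dynamics_mult_vec:
  assumes "A \<in> carrier_mat n n" "F \<in> carrier_mat n n" "G \<in> carrier_mat n n"
      "P \<in> carrier_mat n n" "Q \<in> carrier_mat n n"
    and "u \<in> carrier_vec n" "d \<in> carrier_vec n" "e \<in> carrier_vec n"
  shows "error_dynamics n A F G P Q *\<^sub>v (u @\<^sub>v d @\<^sub>v e) =
    ((A + F + G) *\<^sub>v u + F *\<^sub>v d + (Q + F) *\<^sub>v e) @\<^sub>v ((A - P) *\<^sub>v d) @\<^sub>v ((A - Q) *\<^sub>v e)"
  unfolding error_dynamics_def using assms by (subst block3_mult_append_vec) (auto simp: zero_mult_mat_vec)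

lemma estimate_coords_mult_vec:
  assumes "u \<in> carrier_vec n" "d \<in> carrier_vec n" "e \<in> carrier_vec n"
  shows "estimate_coords n *\<^sub>v (u @\<^sub>v d @\<^sub>v e) = (u + e) @\<^sub>v (u + d + e) @\<^sub>v u"
  unfolding estimate_coords_def using assms
  by (subst block3_mult_append_vec) (auto simp: zero_mult_mat_vec)

lemma error_coords_mult_vec:
  assumes "x \<in> carrier_vec n" "y \<in> carrier_vec n" "w \<in> carrier_vec n"
  shows "error_coords n *\<^sub>v (x @\<^sub>v y @\<^sub>v w) = w @\<^sub>v (y - x) @\<^sub>v (x - w)"
  unfolding error_coords_def using assms
  by (subst block3_mult_append_vec) (auto simp: zero_mult_mat_vec)

lemma estimate_error_coords_inverse:
  "estimate_coords n * error_coords n = 1\<^sub>m (3 * n)"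
  "error_coords n * estimate_coords n = 1\<^sub>m (3 * n)"
proof -
  have T: "estimate_coords n \<in> carrier_mat (3 * n) (3 * n)"
    and S: "error_coords n \<in> carrier_mat (3 * n) (3 * n)"
    by (simp_all add: observer_matrices_carrier)
  show "estimate_coords n * error_coords n = 1\<^sub>m (3 * n)"
  proof (rule eq_mat_mult_vecI)
    fix v :: "real vec" assume vc: "v \<in> carrier_vec (3 * n)"
    then obtain x y w where xyw: "x \<in> carrier_vec n" "y \<in> carrier_vec n" "w \<in> carrier_vec n"
      and v: "v = x @\<^sub>v y @\<^sub>v w" by (rule carrier_vec_3n_cases)
    have "(estimate_coords n * error_coords n) *\<^sub>v v = estimate_coords n *\<^sub>v (error_coords n *\<^sub>v v)"
      by (rule assoc_mult_mat_vec[OF T S vc])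
    also have "\<dots> = v"
      using xyw unfolding v
      by (simp add: error_coords_mult_vec estimate_coords_mult_vec) (auto intro!: eq_vecI)
    finally show "(estimate_coords n * error_coords n) *\<^sub>v v = 1\<^sub>m (3 * n) *\<^sub>v v"
      using vc by simp
  qed (use T S in auto)
  show "error_coords n * estimate_coords n = 1\<^sub>m (3 * n)"
  proof (rule eq_mat_mult_vecI)
    fix v :: "real vec" assume vc: "v \<in> carrier_vec (3 * n)"
    then obtain u d e where ude: "u \<in> carrier_vec n" "d \<in> carrier_vec n" "e \<in> carrier_vec n"
      and v: "v = u @\<^sub>v d @\<^sub>v e" by (rule carrier_vec_3n_cases)
    have "(error_coords n * estimate_coords n) *\<^sub>v v = error_coords n *\<^sub>v (estimate_coords n *\<^sub>v v)"
      by (rule assoc_mult_mat_vec[OF S T vc])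
    also have "\<dots> = v"
      using ude unfolding v
      by (simp add: error_coords_mult_vec estimate_coords_mult_vec) (auto intro!: eq_vecI)
    finally show "(error_coords n * estimate_coords n) *\<^sub>v v = 1\<^sub>m (3 * n) *\<^sub>v v"
      using vc by simp
  qed (use T S in auto)
qed

lemma observer_loop_estimate_coords:
  assumes mats: "A \<in> carrier_mat n n" "F \<in> carrier_mat n n" "G \<in> carrier_mat n n"
      "P \<in> carrier_mat n n" "Q \<in> carrier_mat n n"
  shows "observer_loop n A F G P Q * estimate_coords n = estimate_coords n * error_dynamics n A F G P Q"
proof -
  have T: "estimate_coords n \<in> carrier_mat (3 * n) (3 * n)"
    and M: "observer_loop n A F G P Q \<in> carrier_mat (3 * n) (3 * n)"
    and N: "error_dynamics n A F G P Q \<in> carrier_mat (3 * n) (3 * n)"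
    by (simp_all add: observer_matrices_carrier)
  show ?thesis
  proof (rule eq_mat_mult_vecI)
    fix v :: "real vec" assume vc: "v \<in> carrier_vec (3 * n)"
    then obtain u d e where ude: "u \<in> carrier_vec n" "d \<in> carrier_vec n" "e \<in> carrier_vec n"
      and v: "v = u @\<^sub>v d @\<^sub>v e" by (rule carrier_vec_3n_cases)
    have "(observer_loop n A F G P Q * estimate_coords n) *\<^sub>v v =
        observer_loop n A F G P Q *\<^sub>v (estimate_coords n *\<^sub>v v)"
      by (rule assoc_mult_mat_vec[OF M T vc])
    also have "\<dots> = estimate_coords n *\<^sub>v (error_dynamics n A F G P Q *\<^sub>v v)"
      using ude mats unfolding v
      by (simp add: error_dynamics_mult_vec estimate_coords_mult_vec observer_loop_mult_vec
          mult_add_distrib_mat_vec[of _ n n] add_mult_distrib_mat_vec[of _ n n]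
          minus_mult_distrib_mat_vec[of _ n n] minus_carrier_mat)
        (auto intro!: eq_vecI)
    also have "\<dots> = (estimate_coords n * error_dynamics n A F G P Q) *\<^sub>v v"
      by (rule assoc_mult_mat_vec[OF T N vc, symmetric])
    finally show "(observer_loop n A F G P Q * estimate_coords n) *\<^sub>v v =
        (estimate_coords n * error_dynamics n A F G P Q) *\<^sub>v v" .
  qed (use T M N in auto)
qed

lemma observer_loop_similar_error_dynamics:
  assumes mats: "A \<in> carrier_mat n n" "F \<in> carrier_mat n n" "G \<in> carrier_mat n n"
      "P \<in> carrier_mat n n" "Q \<in> carrier_mat n n"
  shows "similar_mat (observer_loop n A F G P Q) (error_dynamics n A F G P Q)"
proof (rule similar_matI)
  let ?M = "observer_loop n A F G P Q" and ?N = "error_dynamics n A F G P Q"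
  have T: "estimate_coords n \<in> carrier_mat (3 * n) (3 * n)"
    and S: "error_coords n \<in> carrier_mat (3 * n) (3 * n)"
    and M: "?M \<in> carrier_mat (3 * n) (3 * n)"
    and N: "?N \<in> carrier_mat (3 * n) (3 * n)"
    by (simp_all add: observer_matrices_carrier)
  then show "{?M, ?N, estimate_coords n, error_coords n} \<subseteq> carrier_mat (3 * n) (3 * n)" by auto
  have "?M = ?M * (estimate_coords n * error_coords n)"
    using M by (simp add: estimate_error_coords_inverse)
  also have "\<dots> = (estimate_coords n * ?N) * error_coords n"
    using M T S by (simp add: assoc_mult_mat[symmetric, of _ "3 * n" "3 * n" _ "3 * n" _ "3 * n"]
        observer_loop_estimate_coords[OF mats])
  finally show "?M = estimate_coords n * ?N * error_coords n" .
qed (simp_all add: estimate_error_coords_inverse)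

lemma char_poly_observer_loop:
  assumes mats: "A \<in> carrier_mat n n" "F \<in> carrier_mat n n" "G \<in> carrier_mat n n"
      "P \<in> carrier_mat n n" "Q \<in> carrier_mat n n"
  shows "char_poly (observer_loop n A F G P Q) = char_poly (A + F + G) * char_poly (A - P) * char_poly (A - Q)"
proof -
  have "char_poly (observer_loop n A F G P Q) = char_poly (error_dynamics n A F G P Q)"
    by (rule char_poly_similar[OF observer_loop_similar_error_dynamics[OF mats]])
  also have "\<dots> = char_poly (A + F + G) * char_poly (A - P) * char_poly (A - Q)"
    unfolding error_dynamics_def
    by (subst char_poly_block3_upper_triangular) (use mats in \<open>auto simp: minus_carrier_mat\<close>)
  finally show ?thesis .
qed

lemma Xset_error_coords: "Xset n = {z \<in> carrier_vec (3 * n). 0\<^sub>v (3 * n) \<le> error_coords n *\<^sub>v z}"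
proof -
  have "z \<in> Xset n \<longleftrightarrow> 0\<^sub>v (3 * n) \<le> error_coords n *\<^sub>v z" if "z \<in> carrier_vec (3 * n)" for z
  proof -
    obtain x y w where xyw: "x \<in> carrier_vec n" "y \<in> carrier_vec n" "w \<in> carrier_vec n"
      and z: "z = x @\<^sub>v y @\<^sub>v w" using \<open>z \<in> carrier_vec (3 * n)\<close> by (rule carrier_vec_3n_cases)
    have "z \<in> Xset n \<longleftrightarrow> (\<forall>i < n. 0 \<le> w $ i \<and> w $ i \<le> x $ i \<and> x $ i \<le> y $ i)"
      using xyw unfolding Xset_def z by (auto intro: order_trans)
    also have "\<dots> \<longleftrightarrow> (\<forall>i < 3 * n. 0 \<le> (w @\<^sub>v (y - x) @\<^sub>v (x - w)) $ i)"
      unfolding all_less_3n using xyw by auto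
    also have "\<dots> \<longleftrightarrow> 0\<^sub>v (3 * n) \<le> error_coords n *\<^sub>v z"
    proof -
      have "dim_vec (w @\<^sub>v (y - x) @\<^sub>v (x - w)) = 3 * n" using xyw by simp
      then show ?thesis unfolding z error_coords_mult_vec[OF xyw] less_eq_vec_def by simp
    qed
    finally show ?thesis .
  qed
  moreover have "Xset n \<subseteq> carrier_vec (3 * n)" unfolding Xset_def carrier_vec_def by blast
  ultimately show ?thesis by blast
qed

lemma invariant_Xset_iff_nonneg_error_dynamics:
  assumes mats: "A \<in> carrier_mat n n" "F \<in> carrier_mat n n" "G \<in> carrier_mat n n"
      "P \<in> carrier_mat n n" "Q \<in> carrier_mat n n"
  shows "invariant_under (observer_loop n A F G P Q) (Xset n) \<longleftrightarrow> nonneg_mat (error_dynamics n A F G P Q)"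
proof -
  let ?M = "observer_loop n A F G P Q" and ?N = "error_dynamics n A F G P Q"
    and ?T = "estimate_coords n" and ?S = "error_coords n"
  have T: "?T \<in> carrier_mat (3 * n) (3 * n)" and S: "?S \<in> carrier_mat (3 * n) (3 * n)"
    and M: "?M \<in> carrier_mat (3 * n) (3 * n)" and N: "?N \<in> carrier_mat (3 * n) (3 * n)"
    by (simp_all add: observer_matrices_carrier)
  have ST: "?S *\<^sub>v (?T *\<^sub>v v) = v" and TS: "?T *\<^sub>v (?S *\<^sub>v v) = v"
    if v: "v \<in> carrier_vec (3 * n)" for v
    using assoc_mult_mat_vec[OF S T v] assoc_mult_mat_vec[OF T S v] v
    by (simp_all add: estimate_error_coords_inverse)
  have SM: "?S *\<^sub>v (?M *\<^sub>v z) = ?N *\<^sub>v (?S *\<^sub>v z)" if z: "z \<in> carrier_vec (3 * n)" for z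
  proof -
    have Sz: "?S *\<^sub>v z \<in> carrier_vec (3 * n)" using S z by simp
    have "?M *\<^sub>v z = ?M *\<^sub>v (?T *\<^sub>v (?S *\<^sub>v z))" using TS[OF z] by simp
    also have "\<dots> = ?T *\<^sub>v (?N *\<^sub>v (?S *\<^sub>v z))"
      using assoc_mult_mat_vec[OF M T Sz] assoc_mult_mat_vec[OF T N Sz]
      by (simp add: observer_loop_estimate_coords[OF mats])
    finally show ?thesis using ST N Sz by simp
  qed
  have X: "Xset n \<subseteq> carrier_vec (3 * n)" unfolding Xset_error_coords by blast
  have "invariant_under ?M (Xset n) \<longleftrightarrow> (\<forall>z \<in> Xset n. ?M *\<^sub>v z \<in> Xset n)"
    by (rule invariant_under_iff_step[OF M X])
  also have "\<dots> \<longleftrightarrow> (\<forall>v \<in> carrier_vec (3 * n). 0\<^sub>v (3 * n) \<le> v \<longrightarrow> 0\<^sub>v (3 * n) \<le> ?N *\<^sub>v v)"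
  proof (intro iffI ballI impI)
    fix v :: "real vec" assume step: "\<forall>z \<in> Xset n. ?M *\<^sub>v z \<in> Xset n"
      and v: "v \<in> carrier_vec (3 * n)" and "0\<^sub>v (3 * n) \<le> v"
    then have "?T *\<^sub>v v \<in> Xset n" using T ST[OF v] by (simp add: Xset_error_coords)
    then have "0\<^sub>v (3 * n) \<le> ?S *\<^sub>v (?M *\<^sub>v (?T *\<^sub>v v))"
      using step by (simp add: Xset_error_coords)
    then show "0\<^sub>v (3 * n) \<le> ?N *\<^sub>v v" using SM ST[OF v] T v by simp
  next
    fix z assume pos: "\<forall>v \<in> carrier_vec (3 * n). 0\<^sub>v (3 * n) \<le> v \<longrightarrow> 0\<^sub>v (3 * n) \<le> ?N *\<^sub>v v"
      and "z \<in> Xset n"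
    then have z: "z \<in> carrier_vec (3 * n)" and "0\<^sub>v (3 * n) \<le> ?S *\<^sub>v z"
      by (simp_all add: Xset_error_coords)
    then have "0\<^sub>v (3 * n) \<le> ?S *\<^sub>v (?M *\<^sub>v z)" using pos S SM[OF z] by simp
    then show "?M *\<^sub>v z \<in> Xset n" using M z by (simp add: Xset_error_coords)
  qed
  also have "\<dots> \<longleftrightarrow> nonneg_mat ?N"
    by (rule nonneg_mat_iff_mult_vec[OF N, symmetric])
  finally show ?thesis .
qed

lemma nonneg_error_dynamics_iff:
  assumes mats: "A \<in> carrier_mat n n" "F \<in> carrier_mat n n" "G \<in> carrier_mat n n"
      "P \<in> carrier_mat n n" "Q \<in> carrier_mat n n"
  shows "nonneg_mat (error_dynamics n A F G P Q) \<longleftrightarrow>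
    nonneg_mat (A + F + G) \<and> nonneg_mat F \<and> nonneg_mat (Q + F) \<and> nonneg_mat (A - P) \<and> nonneg_mat (A - Q)"
  unfolding error_dynamics_def using mats
  by (subst nonneg_mat_block3_iff)
    (auto simp: minus_carrier_mat numeral_3_eq_3 less_Suc_eq nonneg_mat_def)

lemma observer_loop_merge_feedback_gains:
  assumes mats: "A \<in> carrier_mat n n" "F \<in> carrier_mat n n" "G \<in> carrier_mat n n"
      "P \<in> carrier_mat n n" "Q \<in> carrier_mat n n"
    and Q_nonneg: "nonneg_mat Q"
    and schur: "schur (observer_loop n A F G P Q)"
    and inv: "invariant_under (observer_loop n A F G P Q) (Xset n)"
  shows "schur (observer_loop n A (0\<^sub>m n n) (F + G) P Q) \<and>
    invariant_under (observer_loop n A (0\<^sub>m n n) (F + G) P Q) (Xset n)"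
proof
  have zero: "0\<^sub>m n n \<in> carrier_mat n n" and FG: "F + G \<in> carrier_mat n n" using mats by auto
  note mats' = mats(1) zero FG mats(4,5)
  have AFG: "A + 0\<^sub>m n n + (F + G) = A + F + G" using mats by (intro eq_matI) auto
  have "char_poly (observer_loop n A (0\<^sub>m n n) (F + G) P Q) = char_poly (observer_loop n A F G P Q)"
    by (simp add: char_poly_observer_loop[OF mats] char_poly_observer_loop[OF mats'] AFG)
  with schur show "schur (observer_loop n A (0\<^sub>m n n) (F + G) P Q)"
    by (subst schur_cong_char_poly[of _ "3 * n"]) (simp_all add: observer_matrices_carrier)
  have "nonneg_mat (A + F + G)" "nonneg_mat (A - P)" "nonneg_mat (A - Q)"
    using inv by (simp_all add: invariant_Xset_iff_nonneg_error_dynamics[OF mats] nonneg_error_dynamics_iff[OF mats])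
  moreover have "Q + 0\<^sub>m n n = Q" using mats by simp
  ultimately show "invariant_under (observer_loop n A (0\<^sub>m n n) (F + G) P Q) (Xset n)"
    using Q_nonneg
    by (simp add: invariant_Xset_iff_nonneg_error_dynamics[OF mats'] nonneg_error_dynamics_iff[OF mats'] AFG)
      (simp add: nonneg_mat_def)
qed

theorem corollary1:
  fixes n m p :: nat and A B C :: "real mat"
  assumes A: "A \<in> carrier_mat n n" and A_nonneg: "nonneg_mat A"
    and B: "B \<in> carrier_mat n m" and C: "C \<in> carrier_mat p n"
    and ex: "\<exists>Kb Ku Lb Lu. Kb \<in> carrier_mat m n \<and> Ku \<in> carrier_mat m n \<and>
               Lb \<in> carrier_mat n p \<and> Lu \<in> carrier_mat n p \<and>
               nonneg_mat (Lu * C) \<and> schur (closed_loop n A B C Kb Ku Lb Lu) \<and>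
               invariant_under (closed_loop n A B C Kb Ku Lb Lu) (Xset n)"
  shows "\<exists>Ku' Lb' Lu'. Ku' \<in> carrier_mat m n \<and>
               Lb' \<in> carrier_mat n p \<and> Lu' \<in> carrier_mat n p \<and>
               nonneg_mat (Lu' * C) \<and> schur (closed_loop n A B C (0\<^sub>m m n) Ku' Lb' Lu') \<and>
               invariant_under (closed_loop n A B C (0\<^sub>m m n) Ku' Lb' Lu') (Xset n)"
proof -
  obtain Kb Ku Lb Lu where Kb: "Kb \<in> carrier_mat m n" and Ku: "Ku \<in> carrier_mat m n"
    and Lb: "Lb \<in> carrier_mat n p" and Lu: "Lu \<in> carrier_mat n p"
    and Lu_nonneg: "nonneg_mat (Lu * C)" and schur: "schur (closed_loop n A B C Kb Ku Lb Lu)"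
    and inv: "invariant_under (closed_loop n A B C Kb Ku Lb Lu) (Xset n)"
    using ex by blast
  have "closed_loop n A B C (0\<^sub>m m n) (Kb + Ku) Lb Lu =
      observer_loop n A (0\<^sub>m n n) (B * Kb + B * Ku) (Lb * C) (Lu * C)"
    using B Kb Ku by (simp add: closed_loop_eq_observer_loop mult_add_distrib_mat)
  moreover have "schur (observer_loop n A (0\<^sub>m n n) (B * Kb + B * Ku) (Lb * C) (Lu * C)) \<and>
      invariant_under (observer_loop n A (0\<^sub>m n n) (B * Kb + B * Ku) (Lb * C) (Lu * C)) (Xset n)"
    using A B C Kb Ku Lb Lu Lu_nonneg schur inv
    by (intro observer_loop_merge_feedback_gains) (auto simp: closed_loop_eq_observer_loop)
  ultimately show ?thesis
    using Kb Ku Lb Lu Lu_nonneg by (intro exI[of _ "Kb + Ku"] exI[of _ Lb] exI[of _ Lu]) simp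
qed

end
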